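(* Let $H$ be a connected triangle-free graph with no full star-cutset. If $H$ is a restricted frame graph, then $H$ is either a path or a chandelier.
   Context: A full star-cutset of a connected graph $G$ is a set $N[u]=\{u\}\cup N(u)$ whose removal disconnects $G$. A chandelier is a graph obtained from a tree $T$ by adding a new vertex adjacent to every leaf of $T$. A frame is the boundary of an axis-parallel box $I\times J\subset\mathbb R^2$. A graph $G$ is a restricted frame graph if there is a family of frames $\{F_v : v\in V(G)\}$ with $uv\in E(G)$ iff $F_u\cap F_v\neq\emptyset$, satisfying: (1) corners of a frame do not coincide with any point of another frame; (2) the left side of any frame does not intersect any other frame; (3) if the right side of a frame intersects a second frame, this right side intersects both the top and the bottom side of the second frame; (4) if two frames have non-empty intersection, then no frame is entirely contained in the intersection of the two regions bounded by these two frames. *)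

theory Defs
  imports Main "HOL-Library.Library"
begin

definition graph :: "'a set \<Rightarrow> ('a \<Rightarrow> 'a \<Rightarrow> bool) \<Rightarrow> bool" where
  "graph V E \<longleftrightarrow> finite V \<and> (\<forall>u v. E u v \<longrightarrow> u \<in> V \<and> v \<in> V \<and> u \<noteq> v \<and> E v u)"

definition reach_in :: "'a set \<Rightarrow> ('a \<Rightarrow> 'a \<Rightarrow> bool) \<Rightarrow> 'a \<Rightarrow> 'a \<Rightarrow> bool" where
  "reach_in S E = (\<lambda>x y. x \<in> S \<and> y \<in> S \<and> E x y)\<^sup>*\<^sup>*"

definition connected_in :: "'a set \<Rightarrow> ('a \<Rightarrow> 'a \<Rightarrow> bool) \<Rightarrow> bool" where
  "connected_in S E \<longleftrightarrow> S \<noteq> {} \<and> (\<forall>u\<in>S. \<forall>v\<in>S. reach_in S E u v)"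

definition disconnected_in :: "'a set \<Rightarrow> ('a \<Rightarrow> 'a \<Rightarrow> bool) \<Rightarrow> bool" where
  "disconnected_in S E \<longleftrightarrow> (\<exists>u\<in>S. \<exists>v\<in>S. \<not> reach_in S E u v)"

definition triangle_free :: "'a set \<Rightarrow> ('a \<Rightarrow> 'a \<Rightarrow> bool) \<Rightarrow> bool" where
  "triangle_free V E \<longleftrightarrow> \<not> (\<exists>a\<in>V. \<exists>b\<in>V. \<exists>c\<in>V. E a b \<and> E b c \<and> E a c)"

definition closed_nbhd :: "'a set \<Rightarrow> ('a \<Rightarrow> 'a \<Rightarrow> bool) \<Rightarrow> 'a \<Rightarrow> 'a set" where
  "closed_nbhd V E u = insert u {v \<in> V. E u v}"

definition has_full_star_cutset :: "'a set \<Rightarrow> ('a \<Rightarrow> 'a \<Rightarrow> bool) \<Rightarrow> bool" where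
  "has_full_star_cutset V E \<longleftrightarrow> (\<exists>u\<in>V. disconnected_in (V - closed_nbhd V E u) E)"

definition is_path_graph :: "'a set \<Rightarrow> ('a \<Rightarrow> 'a \<Rightarrow> bool) \<Rightarrow> bool" where
  "is_path_graph V E \<longleftrightarrow> (\<exists>xs. distinct xs \<and> set xs = V \<and>
      (\<forall>u v. E u v \<longleftrightarrow> (\<exists>i. Suc i < length xs \<and> {u, v} = {xs ! i, xs ! Suc i})))"

definition has_cycle_in :: "'a set \<Rightarrow> ('a \<Rightarrow> 'a \<Rightarrow> bool) \<Rightarrow> bool" where
  "has_cycle_in S E \<longleftrightarrow> (\<exists>cs. length cs \<ge> 3 \<and> distinct cs \<and> set cs \<subseteq> S \<and>
      (\<forall>i. Suc i < length cs \<longrightarrow> E (cs ! i) (cs ! Suc i)) \<and> E (last cs) (hd cs))"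

definition is_tree_in :: "'a set \<Rightarrow> ('a \<Rightarrow> 'a \<Rightarrow> bool) \<Rightarrow> bool" where
  "is_tree_in S E \<longleftrightarrow> connected_in S E \<and> \<not> has_cycle_in S E"

definition is_leaf_in :: "'a set \<Rightarrow> ('a \<Rightarrow> 'a \<Rightarrow> bool) \<Rightarrow> 'a \<Rightarrow> bool" where
  "is_leaf_in S E v \<longleftrightarrow> v \<in> S \<and> card {w \<in> S. E v w} = 1"

text \<open>Chandelier: there is a vertex c such that G - c is a tree T and c is
adjacent exactly to the leaves of T (i.e. G arises from T by adding c).\<close>
definition is_chandelier :: "'a set \<Rightarrow> ('a \<Rightarrow> 'a \<Rightarrow> bool) \<Rightarrow> bool" where
  "is_chandelier V E \<longleftrightarrow> (\<exists>c\<in>V. is_tree_in (V - {c}) E \<and>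
      {w \<in> V. E c w} = {v. is_leaf_in (V - {c}) E v})"

text \<open>An axis-parallel box [x1,x2] x [y1,y2] is encoded as (x1, x2, y1, y2).\<close>
type_synonym box = "real \<times> real \<times> real \<times> real"

definition valid_box :: "box \<Rightarrow> bool" where
  "valid_box B = (case B of (x1, x2, y1, y2) \<Rightarrow> x1 < x2 \<and> y1 < y2)"

definition left_side :: "box \<Rightarrow> (real \<times> real) set" where
  "left_side B = (case B of (x1, x2, y1, y2) \<Rightarrow> {x1} \<times> {y1..y2})"

definition right_side :: "box \<Rightarrow> (real \<times> real) set" where
  "right_side B = (case B of (x1, x2, y1, y2) \<Rightarrow> {x2} \<times> {y1..y2})"

definition bottom_side :: "box \<Rightarrow> (real \<times> real) set" where
  "bottom_side B = (case B of (x1, x2, y1, y2) \<Rightarrow> {x1..x2} \<times> {y1})"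

definition top_side :: "box \<Rightarrow> (real \<times> real) set" where
  "top_side B = (case B of (x1, x2, y1, y2) \<Rightarrow> {x1..x2} \<times> {y2})"

definition corners :: "box \<Rightarrow> (real \<times> real) set" where
  "corners B = (case B of (x1, x2, y1, y2) \<Rightarrow> {(x1, y1), (x1, y2), (x2, y1), (x2, y2)})"

definition frame :: "box \<Rightarrow> (real \<times> real) set" where
  "frame B = left_side B \<union> right_side B \<union> bottom_side B \<union> top_side B"

definition region :: "box \<Rightarrow> (real \<times> real) set" where
  "region B = (case B of (x1, x2, y1, y2) \<Rightarrow> {x1..x2} \<times> {y1..y2})"

definition restricted_frame_graph :: "'a set \<Rightarrow> ('a \<Rightarrow> 'a \<Rightarrow> bool) \<Rightarrow> bool" where
  "restricted_frame_graph V E \<longleftrightarrow> (\<exists>F :: 'a \<Rightarrow> box.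
     (\<forall>v\<in>V. valid_box (F v)) \<and>
     (\<forall>u\<in>V. \<forall>v\<in>V. u \<noteq> v \<longrightarrow> (E u v \<longleftrightarrow> frame (F u) \<inter> frame (F v) \<noteq> {})) \<and>
     \<comment> \<open>(1) corners of a frame avoid every other frame\<close>
     (\<forall>u\<in>V. \<forall>v\<in>V. u \<noteq> v \<longrightarrow> corners (F u) \<inter> frame (F v) = {}) \<and>
     \<comment> \<open>(2) the left side of a frame meets no other frame\<close>
     (\<forall>u\<in>V. \<forall>v\<in>V. u \<noteq> v \<longrightarrow> left_side (F u) \<inter> frame (F v) = {}) \<and>
     \<comment> \<open>(3) a right side meeting another frame meets its top and bottom sides\<close>
     (\<forall>u\<in>V. \<forall>v\<in>V. u \<noteq> v \<longrightarrow> right_side (F u) \<inter> frame (F v) \<noteq> {} \<longrightarrow>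
          right_side (F u) \<inter> top_side (F v) \<noteq> {} \<and> right_side (F u) \<inter> bottom_side (F v) \<noteq> {}) \<and>
     \<comment> \<open>(4) no frame inside the intersection of the regions of two intersecting frames\<close>
     (\<forall>u\<in>V. \<forall>v\<in>V. u \<noteq> v \<longrightarrow> frame (F u) \<inter> frame (F v) \<noteq> {} \<longrightarrow>
          (\<forall>w\<in>V. \<not> frame (F w) \<subseteq> region (F u) \<inter> region (F v))))"

end

theory Submission
  imports Defs
begin

text \<open>In a restricted frame representation two frames meet exactly when the right side of one box
  cuts vertically through a lower box (the higher box crosses the lower one), and
  non-adjacent boxes are disjoint or strictly nested. Call a vertex hollow if its box contains
  another box. Since no full star-cutset exists, everything non-adjacent to a hollow vertex
  lies inside it; so hollow vertices are pairwise adjacent, and a vertex crossed by two others,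
  e.g. the lowest vertex of a cycle, forces a hollow vertex.

  Without hollow vertices every vertex has at most one crossing parent, and star-cutsets
  forbid branching except at the highest vertex, so the graph is a path. Two hollow vertices
  leave room for only one more vertex inside each, giving a path or a cycle on four vertices.
  With exactly one hollow vertex \<open>h\<close>, either the graph is a short path, or \<open>G - h\<close> is acyclic
  and connected, and its leaves are exactly the neighbours of \<open>h\<close>, i.e. \<open>G\<close> is a chandelier.\<close>

section \<open>Reachability and paths in graphs\<close>

lemma reach_in_preserves:
  assumes "reach_in S E x y" "P x"
    and "\<And>p q. p \<in> S \<Longrightarrow> q \<in> S \<Longrightarrow> E p q \<Longrightarrow> P p \<Longrightarrow> P q"
  shows "P y"
  using assms(1,2) unfolding reach_in_def
  by (induction rule: rtranclp_induct) (use assms(3) in auto)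

lemma reach_in_mono: "reach_in S E x y \<Longrightarrow> S \<subseteq> T \<Longrightarrow> reach_in T E x y"
  unfolding reach_in_def
  by (induction rule: rtranclp_induct) (auto intro: rtranclp.rtrancl_into_rtrancl)

lemma reach_in_refl: "reach_in S E x x"
  unfolding reach_in_def by simp

lemma reach_in_step: "reach_in S E x y \<Longrightarrow> y \<in> S \<Longrightarrow> z \<in> S \<Longrightarrow> E y z \<Longrightarrow> reach_in S E x z"
  unfolding reach_in_def by (auto intro: rtranclp.rtrancl_into_rtrancl)

lemma reach_in_trans: "reach_in S E x y \<Longrightarrow> reach_in S E y z \<Longrightarrow> reach_in S E x z"
  unfolding reach_in_def by simp

lemma reach_in_sym:
  assumes "reach_in S E x y" "\<And>u v. E u v \<Longrightarrow> E v u"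
  shows "reach_in S E y x"
  using assms(1) unfolding reach_in_def
proof (induction rule: rtranclp_induct)
  case (step y z)
  then show ?case
    using assms(2)[of y z] by (auto intro: converse_rtranclp_into_rtranclp)
qed simp

lemma reach_in_first_step:
  "reach_in S E x y \<Longrightarrow> x \<noteq> y \<Longrightarrow> \<exists>q\<in>S. E x q"
  unfolding reach_in_def by (auto elim: converse_rtranclpE)

lemma connected_in_if_reach_from:
  assumes "w \<in> S" "\<And>u. u \<in> S \<Longrightarrow> reach_in S E w u" "\<And>u v. E u v \<Longrightarrow> E v u"
  shows "connected_in S E"
  unfolding connected_in_def
proof (intro conjI ballI)
  fix u v
  assume "u \<in> S" "v \<in> S"
  have "reach_in S E u w"
    using reach_in_sym[OF assms(2)[OF \<open>u \<in> S\<close>] assms(3)] .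
  then show "reach_in S E u v"
    using assms(2)[OF \<open>v \<in> S\<close>] by (rule reach_in_trans)
qed (use assms(1) in blast)

lemma graph_edge_sym: "graph V E \<Longrightarrow> E u v \<Longrightarrow> E v u"
  by (simp add: graph_def)

lemma graph_edge_in: "graph V E \<Longrightarrow> E u v \<Longrightarrow> u \<in> V \<and> v \<in> V \<and> u \<noteq> v"
  by (simp add: graph_def)

lemma triangle_free_no_short_cycle:
  assumes "graph V E" "triangle_free V E" "S \<subseteq> V" "finite S" "card S \<le> 3"
  shows "\<not> has_cycle_in S E"
proof
  assume "has_cycle_in S E"
  then obtain cs where cs: "length cs \<ge> 3" "distinct cs" "set cs \<subseteq> S"
    "\<forall>i. Suc i < length cs \<longrightarrow> E (cs ! i) (cs ! Suc i)" "E (last cs) (hd cs)"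
    unfolding has_cycle_in_def by blast
  have "length cs \<le> card S"
    using cs(2,3) assms(4) by (metis card_mono distinct_card)
  then have "length cs = 3" using cs(1) assms(5) by simp
  then obtain p q r where pqr: "cs = [p, q, r]"
    by (auto simp: numeral_3_eq_3 length_Suc_conv)
  have "E p q" "E q r" "E r p"
    using cs(4)[rule_format, of 0] cs(4)[rule_format, of 1] cs(5) by (simp_all add: pqr)
  moreover have "p \<in> V" "q \<in> V" "r \<in> V"
    using cs(3) assms(3) pqr by auto
  ultimately show False
    using assms(2) graph_edge_sym[OF assms(1), of r p] unfolding triangle_free_def by blast
qed

lemma has_cycle_in_cyclic:
  assumes "has_cycle_in S E"
  obtains cs where "length cs \<ge> 3" "distinct cs" "set cs \<subseteq> S"
    "\<And>j. j < length cs \<Longrightarrow> E (cs ! j) (cs ! (Suc j mod length cs))"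
proof -
  obtain cs where cs: "length cs \<ge> 3" "distinct cs" "set cs \<subseteq> S"
    "\<forall>i. Suc i < length cs \<longrightarrow> E (cs ! i) (cs ! Suc i)" "E (last cs) (hd cs)"
    using assms unfolding has_cycle_in_def by blast
  have "E (cs ! j) (cs ! (Suc j mod length cs))" if "j < length cs" for j
  proof (cases "Suc j < length cs")
    case True
    then show ?thesis using cs(4) by simp
  next
    case False
    then have "Suc j = length cs" using that by simp
    then have "cs \<noteq> []" "j = length cs - 1" "Suc j mod length cs = 0" by auto
    then show ?thesis using cs(5) by (simp add: last_conv_nth hd_conv_nth)
  qed
  then show ?thesis using that cs(1-3) by blast
qed

definition consecutive :: "'a list \<Rightarrow> 'a \<Rightarrow> 'a \<Rightarrow> bool" where
  "consecutive xs u v \<longleftrightarrow> (\<exists>i. Suc i < length xs \<and> {u, v} = {xs ! i, xs ! Suc i})"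

lemma consecutive_Nil [simp]: "\<not> consecutive [] u v"
  by (simp add: consecutive_def)

lemma consecutive_Cons:
  "consecutive (x # ys) u v \<longleftrightarrow> (ys \<noteq> [] \<and> {u, v} = {x, hd ys}) \<or> consecutive ys u v"
proof
  assume "consecutive (x # ys) u v"
  then obtain i where i: "Suc i < length (x # ys)" "{u, v} = {(x # ys) ! i, (x # ys) ! Suc i}"
    unfolding consecutive_def by blast
  show "(ys \<noteq> [] \<and> {u, v} = {x, hd ys}) \<or> consecutive ys u v"
  proof (cases i)
    case 0
    then show ?thesis using i by (cases ys) auto
  next
    case (Suc j)
    then show ?thesis using i unfolding consecutive_def by auto
  qed
next
  assume "(ys \<noteq> [] \<and> {u, v} = {x, hd ys}) \<or> consecutive ys u v"
  then show "consecutive (x # ys) u v"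
  proof
    assume "ys \<noteq> [] \<and> {u, v} = {x, hd ys}"
    then show ?thesis
      unfolding consecutive_def by (intro exI[of _ 0]) (cases ys, auto)
  next
    assume "consecutive ys u v"
    then obtain i where "Suc i < length ys" "{u, v} = {ys ! i, ys ! Suc i}"
      unfolding consecutive_def by blast
    then show ?thesis
      unfolding consecutive_def by (intro exI[of _ "Suc i"]) auto
  qed
qed

lemma consecutive_append:
  "consecutive (xs @ ys) u v \<longleftrightarrow> consecutive xs u v \<or> consecutive ys u v \<or>
     (xs \<noteq> [] \<and> ys \<noteq> [] \<and> {u, v} = {last xs, hd ys})"
proof (induction xs)
  case (Cons x xs)
  then show ?case by (cases "xs = []") (auto simp: consecutive_Cons)
qed simp

lemma consecutive_rev: "consecutive (rev xs) u v \<longleftrightarrow> consecutive xs u v"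
  by (induction xs) (auto simp: consecutive_append consecutive_Cons last_rev)

lemma is_path_graph_list:
  assumes "graph V E" "distinct xs" "set xs = V"
    and "\<And>u v. u \<in> V \<Longrightarrow> v \<in> V \<Longrightarrow> E u v \<Longrightarrow> consecutive xs u v"
    and "\<And>u v. consecutive xs u v \<Longrightarrow> E u v \<or> E v u"
  shows "is_path_graph V E"
proof -
  have "E u v \<longleftrightarrow> consecutive xs u v" for u v
    using assms(4,5)[of u v] graph_edge_in[OF assms(1), of u v] graph_edge_sym[OF assms(1), of v u]
    by blast
  then show ?thesis
    using assms(2,3) unfolding is_path_graph_def consecutive_def by blast
qed

lemma path_graph_3:
  assumes "graph V E" "distinct [p0, p1, p2]" "V = {p0, p1, p2}"
    and "E p0 p1" "E p1 p2" "\<not> E p0 p2"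
  shows "is_path_graph V E"
proof (rule is_path_graph_list[OF assms(1,2)])
  have consec: "consecutive [p0, p1, p2] u v \<longleftrightarrow> {u, v} = {p0, p1} \<or> {u, v} = {p1, p2}" for u v
    by (simp add: consecutive_Cons)
  have "\<not> E p2 p0" using assms(6) graph_edge_sym[OF assms(1)] by blast
  then show "consecutive [p0, p1, p2] u v" if "u \<in> V" "v \<in> V" "E u v" for u v
    using that assms(3,6) graph_edge_in[OF assms(1) that(3)] unfolding consec by auto
  show "E u v \<or> E v u" if "consecutive [p0, p1, p2] u v" for u v
    using that assms(4,5) unfolding consec doubleton_eq_iff by auto
qed (use assms(3) in simp)

lemma path_graph_4:
  assumes "graph V E" "distinct [p0, p1, p2, p3]" "V = {p0, p1, p2, p3}"
    and "E p0 p1" "E p1 p2" "E p2 p3" "\<not> E p0 p2" "\<not> E p0 p3" "\<not> E p1 p3"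
  shows "is_path_graph V E"
proof (rule is_path_graph_list[OF assms(1,2)])
  have consec: "consecutive [p0, p1, p2, p3] u v \<longleftrightarrow>
      {u, v} = {p0, p1} \<or> {u, v} = {p1, p2} \<or> {u, v} = {p2, p3}" for u v
    by (simp add: consecutive_Cons)
  have "\<not> E p2 p0" "\<not> E p3 p0" "\<not> E p3 p1" using assms(7-9) graph_edge_sym[OF assms(1)] by blast+
  then show "consecutive [p0, p1, p2, p3] u v" if "u \<in> V" "v \<in> V" "E u v" for u v
    using that assms(3,7-9) graph_edge_in[OF assms(1) that(3)] unfolding consec by auto
  show "E u v \<or> E v u" if "consecutive [p0, p1, p2, p3] u v" for u v
    using that assms(4-6) unfolding consec doubleton_eq_iff by auto
qed (use assms(3) in simp)

lemma chandelier_4_cycle: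
  assumes "graph V E" "triangle_free V E" "distinct [a, b, c, d]" "V = {a, b, c, d}"
    and "E a b" "E b c" "E c d" "E d a"
  shows "is_chandelier V E"
  unfolding is_chandelier_def
proof (intro bexI conjI)
  have sym: "E u v \<Longrightarrow> E v u" for u v using graph_edge_sym[OF assms(1)] .
  have in_V: "E u v \<Longrightarrow> u \<in> V \<and> v \<in> V \<and> u \<noteq> v" for u v using graph_edge_in[OF assms(1)] .
  have T: "V - {a} = {b, c, d}" using assms(3,4) by auto
  have abcd: "a \<in> V" "b \<in> V" "c \<in> V" "d \<in> V" using assms(4) by simp_all
  have no_diag: "\<not> E a c" "\<not> E b d"
    using assms(2,5-7) abcd unfolding triangle_free_def by blast+
  have nbr_b: "{w \<in> V - {a}. E b w} = {c}" and nbr_d: "{w \<in> V - {a}. E d w} = {c}"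
    and nbr_c: "{w \<in> V - {a}. E c w} = {b, d}"
    using T assms(6,7) sym[of c d] sym[of b c] no_diag sym[of d b] in_V[of b b] in_V[of c c] in_V[of d d]
    by auto
  show "is_tree_in (V - {a}) E"
    unfolding is_tree_in_def
  proof
    show "connected_in (V - {a}) E"
    proof (rule connected_in_if_reach_from[where w = c])
      show "c \<in> V - {a}" using T by simp
      show "E u v \<Longrightarrow> E v u" for u v by (rule sym)
      have S: "b \<in> V - {a}" "c \<in> V - {a}" "d \<in> V - {a}" using T by simp_all
      fix u
      assume "u \<in> V - {a}"
      then consider "u = b" | "u = c" | "u = d" using T by blast
      then show "reach_in (V - {a}) E c u"
      proof cases
        case 1
        show ?thesis
          using reach_in_step[OF reach_in_refl[of "V - {a}" E c] S(2,1) sym[OF assms(6)]]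
          by (simp add: 1)
      next
        case 2
        show ?thesis by (simp add: 2 reach_in_refl)
      next
        case 3
        show ?thesis
          using reach_in_step[OF reach_in_refl[of "V - {a}" E c] S(2,3) assms(7)] by (simp add: 3)
      qed
    qed
    show "\<not> has_cycle_in (V - {a}) E"
      by (rule triangle_free_no_short_cycle[OF assms(1,2)]) (auto simp: T card_insert_if abcd)
  qed
  show "{w \<in> V. E a w} = {v. is_leaf_in (V - {a}) E v}"
  proof -
    have "{w \<in> V. E a w} = {b, d}"
      using assms(4,5) sym[OF assms(8)] no_diag in_V[of a a] by auto
    moreover have "is_leaf_in (V - {a}) E v \<longleftrightarrow> v = b \<or> v = d" for v
    proof -
      have bcd: "b \<in> V - {a}" "c \<in> V - {a}" "d \<in> V - {a}" "b \<noteq> d" "c \<noteq> b" "c \<noteq> d"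
        using T assms(3) by auto
      consider "v = b" | "v = c" | "v = d" | "v \<notin> V - {a}" using T by blast
      then show ?thesis
      proof cases
        case 4
        then show ?thesis using bcd(1,3) unfolding is_leaf_in_def by blast
      qed (use nbr_b nbr_c nbr_d bcd in \<open>simp_all add: is_leaf_in_def\<close>)
    qed
    ultimately show ?thesis by auto
  qed
qed (use assms(4) in simp)

section \<open>Boxes and their frames\<close>

lemma mem_frame:
  "(x, y) \<in> frame (x1, x2, y1, y2) \<longleftrightarrow>
     ((x = x1 \<or> x = x2) \<and> y1 \<le> y \<and> y \<le> y2) \<or> (x1 \<le> x \<and> x \<le> x2 \<and> (y = y1 \<or> y = y2))"
  by (auto simp: frame_def left_side_def right_side_def top_side_def bottom_side_def)

lemma mem_corners:
  "p \<in> corners (x1, x2, y1, y2) \<longleftrightarrow> p = (x1, y1) \<or> p = (x1, y2) \<or> p = (x2, y1) \<or> p = (x2, y2)"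
  by (auto simp: corners_def)

lemma mem_left_side: "(x, y) \<in> left_side (x1, x2, y1, y2) \<longleftrightarrow> x = x1 \<and> y1 \<le> y \<and> y \<le> y2"
  by (auto simp: left_side_def)

lemma mem_right_side: "(x, y) \<in> right_side (x1, x2, y1, y2) \<longleftrightarrow> x = x2 \<and> y1 \<le> y \<and> y \<le> y2"
  by (auto simp: right_side_def)

lemma mem_top_side: "(x, y) \<in> top_side (x1, x2, y1, y2) \<longleftrightarrow> x1 \<le> x \<and> x \<le> x2 \<and> y = y2"
  by (auto simp: top_side_def)

lemma mem_bottom_side: "(x, y) \<in> bottom_side (x1, x2, y1, y2) \<longleftrightarrow> x1 \<le> x \<and> x \<le> x2 \<and> y = y1"
  by (auto simp: bottom_side_def)

lemma frame_subset_region: "valid_box B \<Longrightarrow> frame B \<subseteq> region B"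
  by (cases B rule: prod_cases4)
    (auto simp: valid_box_def frame_def region_def left_side_def right_side_def top_side_def bottom_side_def)

text \<open>The right side of \<open>B\<close> cuts through \<open>C\<close> from its bottom side to its top side,
  while the left side of \<open>B\<close> stays to the left of \<open>C\<close>.\<close>
definition box_crosses :: "box \<Rightarrow> box \<Rightarrow> bool" where
  "box_crosses B C \<longleftrightarrow> (case B of (x1, x2, y1, y2) \<Rightarrow> case C of (x1', x2', y1', y2') \<Rightarrow>
     x1 < x1' \<and> x1' < x2 \<and> x2 < x2' \<and> y1 < y1' \<and> y2' < y2)"

definition box_inside :: "box \<Rightarrow> box \<Rightarrow> bool" where
  "box_inside B C \<longleftrightarrow> (case B of (x1, x2, y1, y2) \<Rightarrow> case C of (x1', x2', y1', y2') \<Rightarrow>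
     x1' < x1 \<and> x2 < x2' \<and> y1' < y1 \<and> y2 < y2')"

definition box_apart :: "box \<Rightarrow> box \<Rightarrow> bool" where
  "box_apart B C \<longleftrightarrow> (case B of (x1, x2, y1, y2) \<Rightarrow> case C of (x1', x2', y1', y2') \<Rightarrow>
     x2 < x1' \<or> x2' < x1 \<or> y2 < y1' \<or> y2' < y1)"

definition box_height :: "box \<Rightarrow> real" where
  "box_height B = (case B of (x1, x2, y1, y2) \<Rightarrow> y2 - y1)"

lemma right_side_meets_imp_crosses:
  assumes valid: "x1 < x2" "y1 < y2" "x1' < x2'" "y1' < y2'"
    and corners1: "corners (x1, x2, y1, y2) \<inter> frame (x1', x2', y1', y2') = {}"
    and corners2: "corners (x1', x2', y1', y2') \<inter> frame (x1, x2, y1, y2) = {}"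
    and left: "left_side (x1, x2, y1, y2) \<inter> frame (x1', x2', y1', y2') = {}"
    and right: "right_side (x1, x2, y1, y2) \<inter> top_side (x1', x2', y1', y2') \<noteq> {}"
      "right_side (x1, x2, y1, y2) \<inter> bottom_side (x1', x2', y1', y2') \<noteq> {}"
  shows "box_crosses (x1, x2, y1, y2) (x1', x2', y1', y2')"
proof -
  obtain p q where p: "p \<in> right_side (x1, x2, y1, y2)" "p \<in> top_side (x1', x2', y1', y2')"
    and q: "q \<in> right_side (x1, x2, y1, y2)" "q \<in> bottom_side (x1', x2', y1', y2')"
    using right by blast
  have top: "x1' \<le> x2" "x2 \<le> x2'" "y1 \<le> y2'" "y2' \<le> y2"
    using p by (cases p; auto simp: mem_right_side mem_top_side)+
  have bottom: "y1 \<le> y1'" "y1' \<le> y2"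
    using q by (cases q; auto simp: mem_right_side mem_bottom_side)+
  have "(x1', y2') \<notin> frame (x1, x2, y1, y2)" "(x2', y2') \<notin> frame (x1, x2, y1, y2)"
    using corners2 by (auto simp: mem_corners)
  then have "x1' \<noteq> x2" "x2 \<noteq> x2'"
    using top valid by (auto simp: mem_frame)
  moreover have "(x2, y1) \<notin> frame (x1', x2', y1', y2')" "(x2, y2) \<notin> frame (x1', x2', y1', y2')"
    using corners1 by (auto simp: mem_corners)
  then have "y1 \<noteq> y1'" "y2 \<noteq> y2'"
    using top bottom valid by (auto simp: mem_frame)
  moreover have "x1 < x1'"
  proof (rule ccontr)
    assume "\<not> x1 < x1'"
    then have "(x1, y2') \<in> frame (x1', x2', y1', y2')" "(x1, y2') \<in> left_side (x1, x2, y1, y2)"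
      using top valid by (auto simp: mem_frame mem_left_side)
    then show False using left by blast
  qed
  ultimately show ?thesis
    using top bottom by (auto simp: box_crosses_def)
qed

lemma frames_meet_imp_crosses:
  assumes valid: "x1 < x2" "y1 < y2" "x1' < x2'" "y1' < y2'"
    and corners1: "corners (x1, x2, y1, y2) \<inter> frame (x1', x2', y1', y2') = {}"
    and corners2: "corners (x1', x2', y1', y2') \<inter> frame (x1, x2, y1, y2) = {}"
    and left1: "left_side (x1, x2, y1, y2) \<inter> frame (x1', x2', y1', y2') = {}"
    and left2: "left_side (x1', x2', y1', y2') \<inter> frame (x1, x2, y1, y2) = {}"
    and right1: "right_side (x1, x2, y1, y2) \<inter> frame (x1', x2', y1', y2') \<noteq> {} \<Longrightarrow>
      right_side (x1, x2, y1, y2) \<inter> top_side (x1', x2', y1', y2') \<noteq> {} \<and>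
      right_side (x1, x2, y1, y2) \<inter> bottom_side (x1', x2', y1', y2') \<noteq> {}"
    and right2: "right_side (x1', x2', y1', y2') \<inter> frame (x1, x2, y1, y2) \<noteq> {} \<Longrightarrow>
      right_side (x1', x2', y1', y2') \<inter> top_side (x1, x2, y1, y2) \<noteq> {} \<and>
      right_side (x1', x2', y1', y2') \<inter> bottom_side (x1, x2, y1, y2) \<noteq> {}"
    and meet: "frame (x1, x2, y1, y2) \<inter> frame (x1', x2', y1', y2') \<noteq> {}"
  shows "box_crosses (x1, x2, y1, y2) (x1', x2', y1', y2') \<or>
    box_crosses (x1', x2', y1', y2') (x1, x2, y1, y2)"
proof -
  obtain x y where p: "(x, y) \<in> frame (x1, x2, y1, y2)" "(x, y) \<in> frame (x1', x2', y1', y2')"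
    using meet by auto
  consider "x = x2 \<and> y1 \<le> y \<and> y \<le> y2" | "x = x2' \<and> y1' \<le> y \<and> y \<le> y2'"
    | "x = x1 \<and> y1 \<le> y \<and> y \<le> y2" | "x = x1' \<and> y1' \<le> y \<and> y \<le> y2'"
    | "x1 \<le> x \<and> x \<le> x2 \<and> (y = y1 \<or> y = y2) \<and> x1' \<le> x \<and> x \<le> x2' \<and> (y = y1' \<or> y = y2')"
    using p unfolding mem_frame by blast
  then show ?thesis
  proof cases
    case 1
    then have "(x, y) \<in> right_side (x1, x2, y1, y2)" by (simp add: mem_right_side)
    then show ?thesis
      using right_side_meets_imp_crosses[OF valid corners1 corners2 left1] right1 p(2) by blast
  next
    case 2
    then have "(x, y) \<in> right_side (x1', x2', y1', y2')" by (simp add: mem_right_side)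
    then show ?thesis
      using right_side_meets_imp_crosses[OF valid(3,4,1,2) corners2 corners1 left2] right2 p(1) by blast
  next
    case 3
    then have "(x, y) \<in> left_side (x1, x2, y1, y2)" by (simp add: mem_left_side)
    then show ?thesis using left1 p(2) by blast
  next
    case 4
    then have "(x, y) \<in> left_side (x1', x2', y1', y2')" by (simp add: mem_left_side)
    then show ?thesis using left2 p(1) by blast
  next
    case 5
    show ?thesis
    proof (cases "x1' \<le> x1")
      case True
      then have "(x1, y) \<in> corners (x1, x2, y1, y2)" "(x1, y) \<in> frame (x1', x2', y1', y2')"
        using 5 by (auto simp: mem_corners mem_frame)
      then show ?thesis using corners1 by blast
    next
      case False
      then have "(x1', y) \<in> corners (x1', x2', y1', y2')" "(x1', y) \<in> frame (x1, x2, y1, y2)"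
        using 5 by (auto simp: mem_corners mem_frame)
      then show ?thesis using corners2 by blast
    qed
  qed
qed

lemma crosses_imp_frames_meet:
  assumes "box_crosses B C" "valid_box C"
  shows "frame B \<inter> frame C \<noteq> {}"
proof -
  obtain x1 x2 y1 y2 x1' x2' y1' y2' where "B = (x1, x2, y1, y2)" "C = (x1', x2', y1', y2')"
    by (metis prod_cases4)
  moreover from assms have "(x2, y1') \<in> frame B \<inter> frame C"
    using calculation by (auto simp: box_crosses_def valid_box_def mem_frame)
  ultimately show ?thesis by blast
qed

lemma disjoint_frames_apart_or_nested:
  assumes "valid_box B" "valid_box C" "frame B \<inter> frame C = {}"
  shows "box_apart B C \<or> box_inside B C \<or> box_inside C B"
proof -
  obtain x1 x2 y1 y2 x1' x2' y1' y2' where B: "B = (x1, x2, y1, y2)" and C: "C = (x1', x2', y1', y2')"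
    by (metis prod_cases4)
  have valid: "x1 < x2" "y1 < y2" "x1' < x2'" "y1' < y2'"
    using assms(1,2) by (simp_all add: B C valid_box_def)
  have disj: "(x, y) \<in> frame (x1, x2, y1, y2) \<Longrightarrow> (x, y) \<notin> frame (x1', x2', y1', y2')" for x y
    using assms(3) B C by blast
  have "x2 < x1' \<or> x2' < x1 \<or> y2 < y1' \<or> y2' < y1 \<or>
      (x1' < x1 \<and> x2 < x2' \<and> y1' < y1 \<and> y2 < y2') \<or> (x1 < x1' \<and> x2' < x2 \<and> y1 < y1' \<and> y2' < y2)"
    using valid disj[of x1 y1'] disj[of x1 y2'] disj[of x2 y1'] disj[of x2 y2']
      disj[of x1' y1] disj[of x1' y2] disj[of x2' y1] disj[of x2' y2]
    unfolding mem_frame by smt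
  then show ?thesis
    by (simp add: B C box_apart_def box_inside_def)
qed

lemma box_inside_region_subset: "box_inside B C \<Longrightarrow> valid_box B \<Longrightarrow> region B \<subseteq> region C"
  by (cases B rule: prod_cases4, cases C rule: prod_cases4)
    (auto simp: box_inside_def valid_box_def region_def)

lemma box_crosses_height: "box_crosses B C \<Longrightarrow> box_height C < box_height B"
  by (cases B rule: prod_cases4, cases C rule: prod_cases4)
    (simp add: box_crosses_def box_height_def)

lemma box_inside_not_crosses: "box_inside B C \<Longrightarrow> \<not> box_crosses B C \<and> \<not> box_crosses C B"
  by (cases B rule: prod_cases4, cases C rule: prod_cases4)
    (auto simp: box_crosses_def box_inside_def)

lemma box_inside_asym: "box_inside B C \<Longrightarrow> \<not> box_inside C B"
  by (cases B rule: prod_cases4, cases C rule: prod_cases4) (auto simp: box_inside_def)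

lemma box_inside_if_crosses_inside:
  assumes "box_inside B C" "box_crosses B D \<or> box_crosses D B" "valid_box B" "valid_box D"
    and "box_apart C D \<or> box_inside C D \<or> box_inside D C"
  shows "box_inside D C"
  using assms
  by (cases B rule: prod_cases4, cases C rule: prod_cases4, cases D rule: prod_cases4)
    (simp add: box_crosses_def box_inside_def box_apart_def valid_box_def, smt)

lemma box_crosses_same_nested:
  assumes "box_crosses B D" "box_crosses C D" "valid_box D"
    and "box_apart B C \<or> box_inside B C \<or> box_inside C B"
  shows "box_inside B C \<or> box_inside C B"
  using assms
  by (cases B rule: prod_cases4, cases C rule: prod_cases4, cases D rule: prod_cases4)
    (auto simp: box_crosses_def box_inside_def box_apart_def valid_box_def)

lemma box_crosses_if_inside_crosses:
  "box_inside B C \<Longrightarrow> box_crosses C D \<Longrightarrow> box_crosses B D \<or> box_crosses D B \<Longrightarrow> box_crosses B D"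
  by (cases B rule: prod_cases4, cases C rule: prod_cases4, cases D rule: prod_cases4)
    (auto simp: box_crosses_def box_inside_def)

lemma box_crosses_if_crosses_outside:
  "box_inside B C \<Longrightarrow> box_crosses D C \<Longrightarrow> box_crosses B D \<or> box_crosses D B \<Longrightarrow> box_crosses D B"
  by (cases B rule: prod_cases4, cases C rule: prod_cases4, cases D rule: prod_cases4)
    (auto simp: box_crosses_def box_inside_def)

section \<open>Graphs drawn by crossing and nested boxes\<close>

text \<open>What a restricted frame representation leaves of the geometry: every edge is a crossing
  of one box by the right side of another, two non-adjacent boxes are apart or strictly nested,
  and no box lies in the lens of two crossing boxes.\<close>
locale box_layout =
  fixes V :: "'a set" and E :: "'a \<Rightarrow> 'a \<Rightarrow> bool" and F :: "'a \<Rightarrow> box"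
  assumes graph: "graph V E"
    and connected: "connected_in V E"
    and triangle_free: "triangle_free V E"
    and no_star_cutset: "\<not> has_full_star_cutset V E"
    and valid: "v \<in> V \<Longrightarrow> valid_box (F v)"
    and edge_iff_crosses: "u \<in> V \<Longrightarrow> v \<in> V \<Longrightarrow>
      E u v \<longleftrightarrow> box_crosses (F u) (F v) \<or> box_crosses (F v) (F u)"
    and nonedge_apart_or_nested: "u \<in> V \<Longrightarrow> v \<in> V \<Longrightarrow> u \<noteq> v \<Longrightarrow> \<not> E u v \<Longrightarrow>
      box_apart (F u) (F v) \<or> box_inside (F u) (F v) \<or> box_inside (F v) (F u)"
    and no_box_in_lens: "u \<in> V \<Longrightarrow> v \<in> V \<Longrightarrow> w \<in> V \<Longrightarrow> box_crosses (F u) (F v) \<Longrightarrow>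
      \<not> region (F w) \<subseteq> region (F u) \<inter> region (F v)"
begin

abbreviation crosses :: "'a \<Rightarrow> 'a \<Rightarrow> bool" where
  "crosses u v \<equiv> box_crosses (F u) (F v)"

abbreviation inside :: "'a \<Rightarrow> 'a \<Rightarrow> bool" where
  "inside u v \<equiv> box_inside (F u) (F v)"

abbreviation height :: "'a \<Rightarrow> real" where
  "height u \<equiv> box_height (F u)"

lemma finite_V: "finite V"
  using graph by (simp add: graph_def)

lemma edge_in_V: "E u v \<Longrightarrow> u \<in> V \<and> v \<in> V \<and> u \<noteq> v"
  using graph by (simp add: graph_def)

lemma edge_sym: "E u v \<Longrightarrow> E v u"
  using graph by (simp add: graph_def)

lemma no_triangle: "E x y \<Longrightarrow> E y z \<Longrightarrow> E x z \<Longrightarrow> False"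
  using triangle_free edge_in_V unfolding triangle_free_def by blast

lemma crosses_if_edge: "E u v \<Longrightarrow> crosses u v \<or> crosses v u"
  using edge_iff_crosses edge_in_V by blast

lemma edge_if_crosses: "u \<in> V \<Longrightarrow> v \<in> V \<Longrightarrow> crosses u v \<Longrightarrow> E u v"
  using edge_iff_crosses by blast

lemma crosses_height: "crosses u v \<Longrightarrow> height v < height u"
  by (rule box_crosses_height)

lemma inside_not_edge: "inside v u \<Longrightarrow> \<not> E u v"
  using crosses_if_edge box_inside_not_crosses by blast

lemma inside_neq: "inside v u \<Longrightarrow> u \<noteq> v"
  using box_inside_asym by blast

lemma nonneighbour_iff: "x \<in> V - closed_nbhd V E h \<longleftrightarrow> x \<in> V \<and> x \<noteq> h \<and> \<not> E h x"
  by (auto simp: closed_nbhd_def)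

lemma reach_nonneighbours:
  "h \<in> V \<Longrightarrow> u \<in> V - closed_nbhd V E h \<Longrightarrow> v \<in> V - closed_nbhd V E h \<Longrightarrow>
    reach_in (V - closed_nbhd V E h) E u v"
  using no_star_cutset unfolding has_full_star_cutset_def disconnected_in_def by blast

lemma reach: "u \<in> V \<Longrightarrow> v \<in> V \<Longrightarrow> reach_in V E u v"
  using connected unfolding connected_in_def by blast

lemma nonneighbour_unique_if_isolated:
  assumes "y \<in> V" "u \<in> V - closed_nbhd V E y" "z \<in> V - closed_nbhd V E y"
    and "\<And>q. E u q \<Longrightarrow> q \<in> closed_nbhd V E y"
  shows "z = u"
proof (rule ccontr)
  assume "z \<noteq> u"
  then obtain q where "q \<in> V - closed_nbhd V E y" "E u q"
    using reach_in_first_step[OF reach_nonneighbours[OF assms(1-3)]] by metis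
  then show False using assms(4) by blast
qed

lemma edge_closed_contains_V:
  assumes "u \<in> V" "u \<in> C" "\<And>p q. E p q \<Longrightarrow> p \<in> C \<Longrightarrow> q \<in> C" "v \<in> V"
  shows "v \<in> C"
  using reach[OF assms(1,4)] assms(2) by (rule reach_in_preserves) (use assms(3) in blast)

definition hollow :: "'a \<Rightarrow> bool" where
  "hollow h \<longleftrightarrow> h \<in> V \<and> (\<exists>w\<in>V. inside w h)"

text \<open>The non-neighbours of \<open>h\<close> induce a connected graph, and walking along an edge
  cannot leave the box of \<open>h\<close> without meeting its frame.\<close>
lemma hollow_nonneighbour_inside:
  assumes "hollow h" "z \<in> V" "z \<noteq> h" "\<not> E h z"
  shows "inside z h"
proof -
  obtain w where w: "w \<in> V" "inside w h" using assms(1) hollow_def by auto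
  have h: "h \<in> V" using assms(1) hollow_def by auto
  have "w \<in> V - closed_nbhd V E h"
    using w inside_neq[OF w(2)] inside_not_edge[OF w(2)] nonneighbour_iff by blast
  moreover have z: "z \<in> V - closed_nbhd V E h"
    using assms nonneighbour_iff by blast
  ultimately have "reach_in (V - closed_nbhd V E h) E w z"
    using reach_nonneighbours[OF h] by blast
  then show ?thesis
  proof (rule reach_in_preserves)
    fix p q
    assume pq: "p \<in> V - closed_nbhd V E h" "q \<in> V - closed_nbhd V E h" "E p q" "inside p h"
    then have "q \<in> V" "q \<noteq> h" "\<not> E h q" using nonneighbour_iff by blast+
    then show "inside q h"
      using box_inside_if_crosses_inside[OF pq(4) crosses_if_edge[OF pq(3)]]
        nonedge_apart_or_nested[OF h] valid pq(1) by blast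
  qed (use w in blast)
qed

lemma hollow_adjacent:
  assumes "hollow h" "hollow h'" "h \<noteq> h'"
  shows "E h h'"
proof (rule ccontr)
  assume "\<not> E h h'"
  then have "inside h' h" "inside h h'"
    using hollow_nonneighbour_inside assms edge_sym hollow_def by metis+
  then show False using box_inside_asym by blast
qed

lemma common_crossed_hollow:
  assumes "crosses p v" "crosses p' v" "p \<noteq> p'" "p \<in> V" "p' \<in> V" "v \<in> V"
  shows "hollow p \<or> hollow p'"
proof -
  have "\<not> E p p'"
    using no_triangle[of p v p'] edge_if_crosses assms edge_sym by blast
  then have "inside p p' \<or> inside p' p"
    using box_crosses_same_nested[OF assms(1,2) valid[OF assms(6)]] nonedge_apart_or_nested assms
    by blast
  then show ?thesis using assms(4,5) unfolding hollow_def by blast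
qed

text \<open>The lowest vertex of a cycle is crossed by both of its neighbours on the cycle.\<close>
lemma cycle_common_crossed:
  assumes "has_cycle_in S E" "S \<subseteq> V"
  shows "\<exists>p\<in>S. \<exists>p'\<in>S. \<exists>v\<in>S. p \<noteq> p' \<and> crosses p v \<and> crosses p' v"
proof -
  obtain cs where cs: "length cs \<ge> 3" "distinct cs" "set cs \<subseteq> S"
    "\<And>j. j < length cs \<Longrightarrow> E (cs ! j) (cs ! (Suc j mod length cs))"
    using has_cycle_in_cyclic[OF assms(1)] by blast
  define n where "n = length cs"
  obtain i where i: "i < n" "\<And>j. j < n \<Longrightarrow> height (cs ! i) \<le> height (cs ! j)"
  proof -
    let ?heights = "(\<lambda>j. height (cs ! j)) ` {..<n}"
    have "finite ?heights" "?heights \<noteq> {}"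
      using cs(1) n_def by (auto simp: lessThan_empty_iff)
    then have "Min ?heights \<in> ?heights" by (rule Min_in)
    then obtain i where "i < n" "height (cs ! i) = Min ?heights" by auto
    then show ?thesis using that Min_le[OF \<open>finite ?heights\<close>] by simp
  qed
  have crossed: "crosses (cs ! j) (cs ! i)" if "j < n" "E (cs ! j) (cs ! i)" for j
  proof -
    have "\<not> crosses (cs ! i) (cs ! j)"
      using crosses_height[of "cs ! i" "cs ! j"] i(2)[OF that(1)] by linarith
    then show ?thesis using crosses_if_edge[OF that(2)] by blast
  qed
  define j where "j = (if i = 0 then n - 1 else i - 1)"
  define k where "k = (if Suc i = n then 0 else Suc i)"
  have jk: "j < n" "k < n" "j \<noteq> k" "Suc j mod n = i" "Suc i mod n = k"
    using i(1) cs(1) unfolding j_def k_def n_def by auto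
  have "E (cs ! j) (cs ! i)" "E (cs ! k) (cs ! i)"
    using cs(4)[of j] edge_sym[OF cs(4)[of i]] jk i(1) unfolding n_def by simp_all
  moreover have "cs ! j \<noteq> cs ! k" "cs ! i \<in> S" "cs ! j \<in> S" "cs ! k \<in> S"
    using cs(2,3) jk i(1) unfolding n_def by (auto simp: nth_eq_iff_index_eq)
  ultimately show ?thesis
    using crossed jk(1,2) by blast
qed

lemma cycle_hollow:
  assumes "has_cycle_in S E" "S \<subseteq> V"
  shows "\<exists>h\<in>S. hollow h"
  using cycle_common_crossed[OF assms] common_crossed_hollow assms(2) by blast

end

context box_layout
begin

definition unique_parents :: "'a set \<Rightarrow> bool" where
  "unique_parents T \<longleftrightarrow>
    (\<forall>v p p'. v \<in> V \<longrightarrow> p \<in> T \<longrightarrow> p' \<in> T \<longrightarrow> crosses p v \<longrightarrow> crosses p' v \<longrightarrow> p = p')"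

definition descendants :: "'a set \<Rightarrow> 'a \<Rightarrow> 'a set" where
  "descendants T y = {z. (\<lambda>p q. p \<in> T \<and> q \<in> T \<and> crosses p q)\<^sup>*\<^sup>* y z}"

definition at_most_one_child :: "'a \<Rightarrow> bool" where
  "at_most_one_child z \<longleftrightarrow> (\<forall>y\<in>V. \<forall>y'\<in>V. crosses z y \<longrightarrow> crosses z y' \<longrightarrow> y = y')"

lemma unique_parentsD:
  "unique_parents T \<Longrightarrow> v \<in> V \<Longrightarrow> p \<in> T \<Longrightarrow> p' \<in> T \<Longrightarrow> crosses p v \<Longrightarrow> crosses p' v \<Longrightarrow> p = p'"
  unfolding unique_parents_def by blast

lemma descendants_self: "y \<in> descendants T y"
  by (simp add: descendants_def)

lemma descendant_height: "z \<in> descendants T y \<Longrightarrow> height z \<le> height y"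
  unfolding descendants_def mem_Collect_eq
  by (induction rule: rtranclp_induct) (auto dest: crosses_height)

lemma ancestor_not_descendant: "crosses x y \<Longrightarrow> x \<notin> descendants T y"
  using descendant_height crosses_height by fastforce

lemma descendant_in: "z \<in> descendants T y \<Longrightarrow> y \<in> T \<Longrightarrow> z \<in> T"
  unfolding descendants_def mem_Collect_eq
  by (induction rule: rtranclp_induct) auto

lemma descendants_step:
  "p \<in> descendants T y \<Longrightarrow> p \<in> T \<Longrightarrow> q \<in> T \<Longrightarrow> crosses p q \<Longrightarrow> q \<in> descendants T y"
  unfolding descendants_def by (auto intro: rtranclp.rtrancl_into_rtrancl)

lemma descendant_parent:
  "z \<in> descendants T y \<Longrightarrow> z \<noteq> y \<Longrightarrow> \<exists>p \<in> descendants T y. p \<in> T \<and> z \<in> T \<and> crosses p z"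
  unfolding descendants_def mem_Collect_eq by (erule rtranclp.cases) auto

lemma descendant_first_child:
  "z \<in> descendants T y \<Longrightarrow> z \<noteq> y \<Longrightarrow> \<exists>q. y \<in> T \<and> q \<in> T \<and> crosses y q \<and> z \<in> descendants T q"
  unfolding descendants_def mem_Collect_eq by (erule converse_rtranclpE) auto

lemma edge_leaving_descendants:
  assumes "unique_parents T" "T \<subseteq> V" "y \<in> T" "p \<in> descendants T y" "q \<in> T" "E p q"
    "q \<notin> descendants T y"
  shows "p = y \<and> crosses q y"
proof -
  have p: "p \<in> T" using descendant_in assms by blast
  have "\<not> crosses p q" using descendants_step[OF assms(4) p assms(5)] assms(7) by blast
  then have qp: "crosses q p" using crosses_if_edge[OF assms(6)] by blast
  show ?thesis
  proof (cases "p = y")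
    case False
    then obtain p' where "p' \<in> descendants T y" "p' \<in> T" "crosses p' p"
      using descendant_parent[OF assms(4)] by blast
    moreover have "p' = q"
      using unique_parentsD[OF assms(1) _ calculation(2) assms(5) calculation(3) qp] assms(2) p by blast
    ultimately show ?thesis using assms(7) by blast
  qed (use qp in simp)
qed

lemma children_not_reach:
  assumes "unique_parents T" "T \<subseteq> V" "x \<in> T" "r \<in> T" "s \<in> T" "r \<noteq> s"
    "crosses x r" "crosses x s" "S \<subseteq> T" "x \<notin> S" "r \<in> S" "s \<in> S"
  shows "\<not> reach_in S E r s"
proof
  assume "reach_in S E r s"
  then have "s \<in> descendants T r"
  proof (rule reach_in_preserves)
    fix p q
    assume pq: "p \<in> S" "q \<in> S" "E p q" "p \<in> descendants T r"
    show "q \<in> descendants T r"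
    proof (rule ccontr)
      assume "q \<notin> descendants T r"
      then have "crosses q r"
        using edge_leaving_descendants[OF assms(1,2,4) pq(4) _ pq(3)] pq(2) assms(9) by blast
      then have "q = x"
        using unique_parentsD[OF assms(1) _ _ assms(3) _ assms(7)] assms(2,4,9) pq(2) by blast
      then show False using pq(2) assms(10) by blast
    qed
  qed (rule descendants_self)
  moreover have "x \<notin> descendants T r" using ancestor_not_descendant[OF assms(7)] .
  moreover have "E s x"
    using edge_sym[OF edge_if_crosses[OF _ _ assms(8)]] assms(2,3,5) by blast
  ultimately have "s = r" using edge_leaving_descendants[OF assms(1,2,4) _ assms(3)] by blast
  then show False using assms(6) by simp
qed

lemma descendants_no_child:
  "(\<And>y. y \<in> V \<Longrightarrow> \<not> crosses x y) \<Longrightarrow> descendants V x = {x}"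
  using descendant_first_child descendants_self by blast

lemma descendants_only_child:
  assumes "x \<in> V" "y \<in> V" "crosses x y" "at_most_one_child x"
  shows "descendants V x = insert x (descendants V y)"
proof
  show "descendants V x \<subseteq> insert x (descendants V y)"
  proof
    fix z
    assume z: "z \<in> descendants V x"
    show "z \<in> insert x (descendants V y)"
    proof (cases "z = x")
      case False
      then obtain q where "q \<in> V" "crosses x q" "z \<in> descendants V q"
        using descendant_first_child[OF z] by blast
      then show ?thesis using assms(2-4) unfolding at_most_one_child_def by blast
    qed simp
  qed
  have "descendants V y \<subseteq> descendants V x"
    using assms(1-3) unfolding descendants_def by (auto intro: converse_rtranclp_into_rtranclp)
  then show "insert x (descendants V y) \<subseteq> descendants V x"
    using descendants_self by blast
qed

lemma descendants_path:
  assumes "x \<in> V" "\<forall>z\<in>descendants V x. at_most_one_child z"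
  shows "\<exists>xs. xs \<noteq> [] \<and> hd xs = x \<and> distinct xs \<and> set xs = descendants V x \<and>
    (\<forall>u v. consecutive xs u v \<longleftrightarrow> E u v \<and> u \<in> descendants V x \<and> v \<in> descendants V x)"
  using assms
proof (induction "card (descendants V x)" arbitrary: x rule: less_induct)
  case less
  show ?case
  proof (cases "\<exists>y\<in>V. crosses x y")
    case False
    then have "descendants V x = {x}" using descendants_no_child by blast
    then show ?thesis using edge_in_V by (intro exI[of _ "[x]"]) (auto simp: consecutive_def)
  next
    case True
    then obtain y where y: "y \<in> V" "crosses x y" by blast
    have Dx: "descendants V x = insert x (descendants V y)"
      using descendants_only_child[OF less.prems(1) y] less.prems(2) descendants_self by blast
    have x_notin: "x \<notin> descendants V y" using ancestor_not_descendant[OF y(2)] .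
    have "descendants V x \<subseteq> V" using descendant_in less.prems(1) by blast
    then have "finite (descendants V x)" using finite_V by (rule finite_subset)
    then have "card (descendants V y) < card (descendants V x)"
      using Dx x_notin by (simp add: card_insert_if)
    then obtain ys where ys: "ys \<noteq> []" "hd ys = y" "distinct ys" "set ys = descendants V y"
      "\<forall>u v. consecutive ys u v \<longleftrightarrow> E u v \<and> u \<in> descendants V y \<and> v \<in> descendants V y"
      using less.hyps[OF _ y(1)] less.prems(2) Dx by blast
    have x_nbr: "v = y" if "v \<in> descendants V y" "E x v" for v
    proof -
      have "\<not> crosses v x"
        using descendant_height[OF that(1)] crosses_height[OF y(2)] crosses_height[of v x] by linarith
      then have "crosses x v" using crosses_if_edge[OF that(2)] by blast
      then show "v = y"
        using less.prems(2) descendants_self y edge_in_V[OF that(2)] unfolding at_most_one_child_def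
        by blast
    qed
    have Exy: "E x y" using edge_if_crosses[OF less.prems(1) y(1,2)] .
    have consec: "consecutive (x # ys) u v \<longleftrightarrow>
        E u v \<and> u \<in> descendants V x \<and> v \<in> descendants V x" for u v
    proof -
      have "consecutive (x # ys) u v \<longleftrightarrow> {u, v} = {x, y} \<or> consecutive ys u v"
        using ys(1,2) by (simp add: consecutive_Cons)
      moreover have "E u v \<and> u \<in> descendants V x \<and> v \<in> descendants V x \<longleftrightarrow>
          {u, v} = {x, y} \<or> (E u v \<and> u \<in> descendants V y \<and> v \<in> descendants V y)"
        using Dx Exy edge_sym[OF Exy] x_nbr[of v] x_nbr[of u] edge_sym[of u v] edge_in_V[of u v]
          descendants_self[of y V]
        by (auto simp: doubleton_eq_iff)
      ultimately show ?thesis using ys(5) by blast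
    qed
    show ?thesis
    proof (intro exI[of _ "x # ys"] conjI allI)
      show "distinct (x # ys)" using ys(3,4) x_notin by simp
      show "set (x # ys) = descendants V x" using ys(4) Dx by simp
    qed (simp_all add: consec)
  qed
qed

lemma unique_parents_if_no_hollow:
  assumes "T \<subseteq> V" "\<And>h. h \<in> T \<Longrightarrow> \<not> hollow h"
  shows "unique_parents T"
  unfolding unique_parents_def using common_crossed_hollow assms by blast

text \<open>A neighbour \<open>w\<close> of \<open>v\<close> other than its children \<open>r\<close>, \<open>s\<close> is adjacent to neither of them,
  so \<open>r\<close> and \<open>s\<close> would have to be joined outside \<open>N[w]\<close>, hence avoiding \<open>v\<close>.\<close>
lemma neighbour_of_two_children:
  assumes "unique_parents V" "v \<in> V" "r \<in> V" "s \<in> V" "r \<noteq> s"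
    and "crosses v r" "crosses v s" "E w v"
  shows "w = r \<or> w = s"
proof (rule ccontr)
  assume w: "\<not> (w = r \<or> w = s)"
  have wV: "w \<in> V" using edge_in_V[OF assms(8)] by blast
  have Evr: "E v r" using edge_if_crosses[OF assms(2,3,6)] .
  have Evs: "E v s" using edge_if_crosses[OF assms(2,4,7)] .
  have r: "r \<in> V - closed_nbhd V E w"
    using no_triangle[OF assms(8) Evr] w assms(3) by (auto simp: closed_nbhd_def)
  have s: "s \<in> V - closed_nbhd V E w"
    using no_triangle[OF assms(8) Evs] w assms(4) by (auto simp: closed_nbhd_def)
  have v: "v \<notin> V - closed_nbhd V E w"
    using assms(8) by (simp add: closed_nbhd_def)
  have "\<not> reach_in (V - closed_nbhd V E w) E r s"
    using children_not_reach[OF assms(1) _ assms(2,3,4,5,6,7) _ v r s] by blast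
  then show False using reach_nonneighbours[OF wV r s] by blast
qed

lemma crossed_at_most_one_child:
  assumes "unique_parents V" "p \<in> V" "v \<in> V" "crosses p v"
  shows "at_most_one_child v"
  unfolding at_most_one_child_def
proof (intro ballI impI)
  fix r s
  assume "r \<in> V" "s \<in> V" "crosses v r" "crosses v s"
  moreover have "p \<noteq> r" "p \<noteq> s"
    using crosses_height[OF assms(4)] crosses_height[OF calculation(3)] crosses_height[OF calculation(4)]
    by auto
  moreover have "E p v" using edge_if_crosses assms(2-4) .
  ultimately show "r = s"
    using neighbour_of_two_children[OF assms(1,3)] by blast
qed

lemma at_most_two_children:
  assumes "unique_parents V" "v \<in> V" "r \<in> V" "s \<in> V" "t \<in> V"
    and "crosses v r" "crosses v s" "crosses v t"
  shows "r = s \<or> r = t \<or> s = t"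
proof -
  have "E t v" using edge_sym[OF edge_if_crosses[OF assms(2,5,8)]] .
  then show ?thesis
    using neighbour_of_two_children[OF assms(1-4) _ assms(6,7)] by (cases "r = s") auto
qed

lemma descendants_of_top:
  assumes "unique_parents V" "r \<in> V" "\<And>p. p \<in> V \<Longrightarrow> \<not> crosses p r"
  shows "descendants V r = V"
proof
  show "V \<subseteq> descendants V r"
  proof
    fix z
    assume "z \<in> V"
    with reach[OF assms(2)] have "reach_in V E r z" by blast
    then show "z \<in> descendants V r"
    proof (rule reach_in_preserves)
      fix p q
      assume "p \<in> V" "q \<in> V" "E p q" "p \<in> descendants V r"
      then show "q \<in> descendants V r"
        using edge_leaving_descendants[OF assms(1) _ assms(2)] assms(3) by blast
    qed (rule descendants_self)
  qed
qed (use descendant_in assms(2) in blast)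

lemma children_descendants_disjoint:
  assumes "unique_parents V" "r \<in> V" "y \<in> V" "y' \<in> V" "y \<noteq> y'" "crosses r y" "crosses r y'"
  shows "descendants V y \<inter> descendants V y' = {}"
proof -
  have "z \<notin> descendants V y" if "z \<in> descendants V y'" for z
    using that unfolding descendants_def[of V y'] mem_Collect_eq
  proof (induction rule: rtranclp_induct)
    case base
    show ?case
    proof
      assume "y' \<in> descendants V y"
      moreover have "E y' r" using edge_sym[OF edge_if_crosses[OF assms(2,4,7)]] .
      ultimately have "y' = y"
        using edge_leaving_descendants[OF assms(1) _ assms(3) _ assms(2) _ ancestor_not_descendant[OF assms(6)]]
        by blast
      then show False using assms(5) by simp
    qed
  next
    case (step z z')
    show ?case
    proof
      assume z': "z' \<in> descendants V y"
      have zV: "z \<in> V" "z' \<in> V" and zz': "crosses z z'" using step.hyps(2) by blast+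
      have "E z' z" using edge_sym[OF edge_if_crosses[OF zV zz']] .
      then have "crosses z y"
        using edge_leaving_descendants[OF assms(1) _ assms(3) z' zV(1) _ step.IH] by blast
      then have "z = r" using unique_parentsD[OF assms(1,3) zV(1) assms(2) _ assms(6)] by blast
      moreover have "z \<in> descendants V y'" using step.hyps(1) unfolding descendants_def by simp
      ultimately show False using ancestor_not_descendant[OF assms(7)] by simp
    qed
  qed
  then show ?thesis by blast
qed

lemma no_edge_between_children_descendants:
  assumes "unique_parents V" "r \<in> V" "y \<in> V" "y' \<in> V" "y \<noteq> y'" "crosses r y" "crosses r y'"
    and "p \<in> descendants V y" "q \<in> descendants V y'"
  shows "\<not> E p q"
proof
  assume "E p q"
  moreover have "q \<in> V" "q \<notin> descendants V y"
    using children_descendants_disjoint[OF assms(1-7)] assms(4,9) descendant_in by blast+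
  ultimately have "crosses q y"
    using edge_leaving_descendants[OF assms(1) _ assms(3,8)] by blast
  then have "q = r" using unique_parentsD[OF assms(1,3) \<open>q \<in> V\<close> assms(2) _ assms(6)] by blast
  then show False using assms(9) ancestor_not_descendant[OF assms(7)] by simp
qed

text \<open>The descendants of the two children are two induced paths, joined through the top vertex.\<close>
lemma path_through_top:
  assumes "unique_parents V" "r \<in> V" "descendants V r = V" "\<And>p. p \<in> V \<Longrightarrow> \<not> crosses p r"
    and "y \<in> V" "y' \<in> V" "y \<noteq> y'" "crosses r y" "crosses r y'"
    and "\<And>z. z \<in> V \<Longrightarrow> z \<noteq> r \<Longrightarrow> at_most_one_child z"
  shows "is_path_graph V E"
proof -
  have chain: "\<exists>xs. xs \<noteq> [] \<and> hd xs = c \<and> distinct xs \<and> set xs = descendants V c \<and>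
      (\<forall>u v. consecutive xs u v \<longleftrightarrow> E u v \<and> u \<in> descendants V c \<and> v \<in> descendants V c)"
    if "c \<in> V" "crosses r c" for c
    using descendants_path[OF that(1)] assms(10) descendant_in that ancestor_not_descendant by metis
  obtain cs where cs: "cs \<noteq> []" "hd cs = y" "distinct cs" "set cs = descendants V y"
      "\<And>u v. consecutive cs u v \<longleftrightarrow> E u v \<and> u \<in> descendants V y \<and> v \<in> descendants V y"
    using chain[OF assms(5,8)] by blast
  obtain cs' where cs': "cs' \<noteq> []" "hd cs' = y'" "distinct cs'" "set cs' = descendants V y'"
      "\<And>u v. consecutive cs' u v \<longleftrightarrow> E u v \<and> u \<in> descendants V y' \<and> v \<in> descendants V y'"
    using chain[OF assms(6,9)] by blast
  have r_notin: "r \<notin> descendants V y" "r \<notin> descendants V y'"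
    using ancestor_not_descendant assms(8,9) by blast+
  have disjoint: "descendants V y \<inter> descendants V y' = {}"
    using children_descendants_disjoint[OF assms(1,2,5-9)] .
  have children: "c = y \<or> c = y'" if "c \<in> V" "crosses r c" for c
    using at_most_two_children[OF assms(1,2,5,6) that(1) assms(8,9) that(2)] assms(7) by blast
  have V_split: "V = insert r (descendants V y \<union> descendants V y')"
  proof
    show "V \<subseteq> insert r (descendants V y \<union> descendants V y')"
    proof
      fix z
      assume "z \<in> V"
      show "z \<in> insert r (descendants V y \<union> descendants V y')"
      proof (cases "z = r")
        case False
        then obtain q where "q \<in> V" "crosses r q" "z \<in> descendants V q"
          using descendant_first_child[of z V r] assms(3) \<open>z \<in> V\<close> by blast
        then show ?thesis using children by blast
      qed simp
    qed
  qed (use descendant_in assms(2,5,6) in blast)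
  define xs where "xs = rev cs @ r # cs'"
  have consec: "consecutive xs u v \<longleftrightarrow>
      consecutive cs u v \<or> {u, v} = {y, r} \<or> {u, v} = {r, y'} \<or> consecutive cs' u v" for u v
    using cs(1,2) cs'(1,2) unfolding xs_def consecutive_append consecutive_rev consecutive_Cons
    by (auto simp: last_rev)
  show ?thesis
  proof (rule is_path_graph_list[OF graph])
    show "distinct xs" using cs(3,4) cs'(3,4) r_notin disjoint by (auto simp: xs_def)
    show "set xs = V" using cs(4) cs'(4) V_split by (auto simp: xs_def)
  next
    fix u v
    assume "consecutive xs u v"
    moreover have "E y r" "E r y'"
      using edge_sym[OF edge_if_crosses[OF assms(2,5,8)]] edge_if_crosses[OF assms(2,6,9)] .
    ultimately show "E u v \<or> E v u"
      using cs(5) cs'(5) unfolding consec doubleton_eq_iff by blast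
  next
    fix u v
    assume uv: "u \<in> V" "v \<in> V" "E u v"
    consider "u = r" | "v = r" | "u \<noteq> r" "v \<noteq> r" by blast
    then show "consecutive xs u v"
    proof cases
      case 1
      then have "crosses r v" using crosses_if_edge[OF uv(3)] assms(4) uv(2) by blast
      then show ?thesis using children uv(2) 1 unfolding consec by (auto simp: insert_commute)
    next
      case 2
      then have "crosses r u" using crosses_if_edge[OF uv(3)] assms(4) uv(1) by blast
      then show ?thesis using children uv(1) 2 unfolding consec by (auto simp: insert_commute)
    next
      case 3
      then have "u \<in> descendants V y \<union> descendants V y'" "v \<in> descendants V y \<union> descendants V y'"
        using uv V_split by blast+
      moreover have "\<not> E u v" if "u \<in> descendants V y" "v \<in> descendants V y'"
        using no_edge_between_children_descendants[OF assms(1,2,5-9) that] .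
      moreover have "\<not> E u v" if "u \<in> descendants V y'" "v \<in> descendants V y"
        using no_edge_between_children_descendants[OF assms(1,2,6,5) _ assms(9,8) that] assms(7) by blast
      ultimately show ?thesis using uv(3) cs(5) cs'(5) unfolding consec by blast
    qed
  qed
qed

lemma path_if_no_hollow:
  assumes "\<And>h. \<not> hollow h"
  shows "is_path_graph V E"
proof -
  have up: "unique_parents V" using unique_parents_if_no_hollow assms by blast
  obtain r where r: "r \<in> V" "\<And>v. v \<in> V \<Longrightarrow> height v \<le> height r"
  proof -
    have "finite (height ` V)" "height ` V \<noteq> {}"
      using finite_V connected by (auto simp: connected_in_def)
    then have "Max (height ` V) \<in> height ` V" by (rule Max_in)
    then obtain r where "r \<in> V" "height r = Max (height ` V)" by auto
    then show ?thesis using Max_ge[OF \<open>finite (height ` V)\<close>] by (intro that) auto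
  qed
  have top: "\<not> crosses p r" if "p \<in> V" for p
    using r(2)[OF that] crosses_height[of p r] by linarith
  have all: "descendants V r = V" using descendants_of_top[OF up r(1) top] .
  have one_child: "at_most_one_child z" if z: "z \<in> V" "z \<noteq> r" for z
  proof -
    have "z \<in> descendants V r" using all z(1) by simp
    then obtain p where "p \<in> V" "crosses p z"
      using descendant_parent z(2) by blast
    then show ?thesis using crossed_at_most_one_child[OF up _ z(1)] by blast
  qed
  show ?thesis
  proof (cases "at_most_one_child r")
    case True
    then have "\<forall>z\<in>descendants V r. at_most_one_child z" using one_child all by blast
    then obtain xs where "distinct xs" "set xs = V"
        "\<And>u v. consecutive xs u v \<longleftrightarrow> E u v \<and> u \<in> V \<and> v \<in> V"
      using descendants_path[OF r(1)] all by metis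
    then show ?thesis by (intro is_path_graph_list[OF graph]) auto
  next
    case False
    then obtain y y' where "y \<in> V" "y' \<in> V" "y \<noteq> y'" "crosses r y" "crosses r y'"
      unfolding at_most_one_child_def by blast
    then show ?thesis using path_through_top[OF up r(1) all top] one_child by blast
  qed
qed

lemma path_or_chandelier_if_two_hollow:
  assumes h: "hollow h" and h': "hollow h'" and hh': "crosses h h'"
  shows "is_path_graph V E \<or> is_chandelier V E"
proof -
  have hV: "h \<in> V" "h' \<in> V" using h h' hollow_def by auto
  have Ehh': "E h h'" using edge_if_crosses[OF hV hh'] .
  have cover: "E h z \<or> E h' z" if z: "z \<in> V" "z \<noteq> h" "z \<noteq> h'" for z
  proof (rule ccontr)
    assume "\<not> (E h z \<or> E h' z)"
    then have "inside z h" "inside z h'"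
      using hollow_nonneighbour_inside h h' z by blast+
    then have "region (F z) \<subseteq> region (F h) \<inter> region (F h')"
      using box_inside_region_subset valid[OF z(1)] by blast
    then show False using no_box_in_lens[OF hV z(1) hh'] by blast
  qed
  obtain y where y: "y \<in> V" "inside y h" using h hollow_def by blast
  have y_nbr: "\<not> E h y" "y \<noteq> h" using inside_not_edge[OF y(2)] inside_neq[OF y(2)] by auto
  then have "y \<noteq> h'" using Ehh' by blast
  then have Eh'y: "E h' y" using cover[OF y(1) y_nbr(2)] y_nbr(1) by blast
  obtain x where x: "x \<in> V" "inside x h'" using h' hollow_def by blast
  have x_nbr: "\<not> E h' x" "x \<noteq> h'" using inside_not_edge[OF x(2)] inside_neq[OF x(2)] by auto
  then have "x \<noteq> h" using edge_sym[OF Ehh'] by blast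
  then have Ehx: "E h x" using cover[OF x(1) _ x_nbr(2)] x_nbr(1) by blast
  text \<open>Every box inside \<open>h\<close> crosses \<open>h'\<close>; two of them would give a third hollow vertex.\<close>
  have y_unique: "z = y" if z: "z \<in> V" "z \<noteq> h" "z \<noteq> h'" "\<not> E h z" for z
  proof (rule ccontr)
    assume "z \<noteq> y"
    have "crosses w h'" if "w \<in> V" "inside w h" "E h' w" for w
      using box_crosses_if_inside_crosses[OF that(2) hh'] crosses_if_edge[OF that(3)] by blast
    then have "crosses z h'" "crosses y h'"
      using hollow_nonneighbour_inside[OF h z(1,2,4)] z cover[OF z(1-3)] y Eh'y by blast+
    then have "hollow z \<or> hollow y"
      using common_crossed_hollow \<open>z \<noteq> y\<close> z(1) y(1) hV(2) by blast
    then show False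
      using hollow_adjacent[OF h] z(2,4) y_nbr by blast
  qed
  have x_unique: "z = x" if z: "z \<in> V" "z \<noteq> h" "z \<noteq> h'" "\<not> E h' z" for z
  proof (rule ccontr)
    assume "z \<noteq> x"
    have "x \<in> V - closed_nbhd V E h'" "z \<in> V - closed_nbhd V E h'"
      using x(1) x_nbr z by (auto simp: closed_nbhd_def)
    then obtain q where q: "q \<in> V - closed_nbhd V E h'" "E x q"
      using reach_in_first_step[OF reach_nonneighbours[OF hV(2)]] \<open>z \<noteq> x\<close> by metis
    then have "q \<noteq> h" "q \<in> V" "q \<noteq> h'" "\<not> E h' q"
      using Ehh' by (auto simp: closed_nbhd_def dest: edge_sym)
    then have "E h q" using cover by blast
    then show False using no_triangle[OF Ehx q(2)] by blast
  qed
  have V: "V = {h, h', y, x}"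
  proof
    show "V \<subseteq> {h, h', y, x}"
    proof
      fix z
      assume "z \<in> V"
      show "z \<in> {h, h', y, x}"
      proof (cases "z = h \<or> z = h'")
        case False
        then show ?thesis
          using x_unique[OF \<open>z \<in> V\<close>] y_unique[OF \<open>z \<in> V\<close>] no_triangle[OF Ehh', of z] by blast
      qed auto
    qed
  qed (use hV x y in blast)
  have distinct: "distinct [h, h', y, x]"
    using Ehx y_nbr x_nbr edge_in_V[OF Ehh'] edge_in_V[OF Ehx] edge_in_V[OF Eh'y] by auto
  show ?thesis
  proof (cases "E y x")
    case True
    have "is_chandelier V E"
      using chandelier_4_cycle[OF graph triangle_free distinct V Ehh' Eh'y True edge_sym[OF Ehx]] .
    then show ?thesis ..
  next
    case False
    have "\<not> E x h'" "\<not> E x y" using x_nbr(1) False edge_sym by blast+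
    moreover have "distinct [x, h, h', y]" "V = {x, h, h', y}" using distinct V by auto
    ultimately have "is_path_graph V E"
      using path_graph_4[OF graph _ _ edge_sym[OF Ehx] Ehh' Eh'y _ _ y_nbr(1)] by blast
    then show ?thesis ..
  qed
qed

end

locale unique_hollow = box_layout +
  fixes h :: 'a
  assumes hollow_h: "hollow h"
    and hollow_unique: "hollow h' \<Longrightarrow> h' = h"
begin

definition inner :: "'a set" where
  "inner = V - closed_nbhd V E h"

lemma h_in_V: "h \<in> V"
  using hollow_h hollow_def by blast

lemma inner_iff: "z \<in> inner \<longleftrightarrow> z \<in> V \<and> z \<noteq> h \<and> \<not> E h z"
  by (auto simp: inner_def closed_nbhd_def)

lemma inner_nonempty: obtains w where "w \<in> inner"
proof -
  obtain w where "w \<in> V" "inside w h" using hollow_h hollow_def by blast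
  then show ?thesis using that inside_neq inside_not_edge inner_iff by blast
qed

lemma reach_inner: "u \<in> inner \<Longrightarrow> v \<in> inner \<Longrightarrow> reach_in inner E u v"
  unfolding inner_def using reach_nonneighbours[OF h_in_V] .

lemma inside_h_if_inner: "z \<in> inner \<Longrightarrow> inside z h"
  using hollow_nonneighbour_inside[OF hollow_h] inner_iff by blast

lemma unique_parents_off_h: "unique_parents (V - {h})"
  using unique_parents_if_no_hollow hollow_unique by blast

text \<open>If \<open>h\<close> crosses \<open>x\<close>, two inner neighbours of \<open>x\<close> would both cross \<open>x\<close>, giving a second
  hollow vertex; if \<open>x\<close> crosses \<open>h\<close>, they would be two children of \<open>x\<close> that the connected set
  of inner vertices joins while avoiding \<open>x\<close>.\<close>
lemma neighbour_one_inner_neighbour: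
  assumes "E h x" "y \<in> inner" "y' \<in> inner" "E x y" "E x y'"
  shows "y = y'"
proof (rule ccontr)
  assume yy': "y \<noteq> y'"
  have x: "x \<in> V" "x \<notin> inner" using edge_in_V[OF assms(1)] assms(1) inner_iff by blast+
  have y: "y \<in> V" "y \<noteq> h" "y' \<in> V" "y' \<noteq> h" using assms(2,3) inner_iff by blast+
  consider "crosses h x" | "crosses x h" using crosses_if_edge[OF assms(1)] by blast
  then show False
  proof cases
    case 1
    have "crosses y x" "crosses y' x"
      using box_crosses_if_inside_crosses[OF inside_h_if_inner[OF assms(2)] 1 crosses_if_edge[OF edge_sym[OF assms(4)]]]
        box_crosses_if_inside_crosses[OF inside_h_if_inner[OF assms(3)] 1 crosses_if_edge[OF edge_sym[OF assms(5)]]]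
      by blast+
    then have "hollow y \<or> hollow y'" using common_crossed_hollow yy' x(1) y(1,3) by blast
    then show False using hollow_unique y(2,4) by blast
  next
    case 2
    have "crosses x y" "crosses x y'"
      using box_crosses_if_crosses_outside[OF inside_h_if_inner[OF assms(2)] 2 crosses_if_edge[OF edge_sym[OF assms(4)]]]
        box_crosses_if_crosses_outside[OF inside_h_if_inner[OF assms(3)] 2 crosses_if_edge[OF edge_sym[OF assms(5)]]]
      by blast+
    moreover have "inner \<subseteq> V - {h}" using inner_iff by blast
    moreover have "x \<in> V - {h}" "y \<in> V - {h}" "y' \<in> V - {h}"
      using x(1) edge_in_V[OF assms(1)] y by auto
    ultimately have "\<not> reach_in inner E y y'"
      using children_not_reach[OF unique_parents_off_h Diff_subset _ _ _ yy'] x(2) assms(2,3) by blast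
    then show False using reach_inner[OF assms(2,3)] by blast
  qed
qed

lemma path_if_neighbour_without_inner_neighbour:
  assumes hx: "E h x" and no_inner: "\<And>y. y \<in> inner \<Longrightarrow> \<not> E x y"
  shows "is_path_graph V E"
proof -
  have x_nbr: "z = h" if "E x z" for z
    using no_triangle[OF hx that] no_inner[of z] edge_in_V[OF that] that inner_iff by blast
  obtain w where w: "w \<in> inner" using inner_nonempty by blast
  text \<open>If \<open>x\<close> were the only neighbour of \<open>h\<close>, no edge would leave the inner vertices.\<close>
  obtain y where hy: "E h y" "y \<noteq> x"
  proof (rule ccontr)
    assume "\<not> thesis"
    then have only_x: "E h y \<Longrightarrow> y = x" for y using that by blast
    have "p \<in> inner \<Longrightarrow> E p q \<Longrightarrow> q \<in> inner" for p q
      using only_x[of q] no_inner[of p] edge_sym[of p q] edge_sym[of h p] edge_in_V[of p q] inner_iff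
      by blast
    then have "h \<in> inner"
      using edge_closed_contains_V[of w inner, OF _ w _ h_in_V] w inner_iff by blast
    then show False using inner_iff by blast
  qed
  have xy: "\<not> E x y" using no_triangle[OF hx _ hy(1)] by blast
  have yV: "y \<in> V" and xV: "x \<in> V" using edge_in_V[OF hy(1)] edge_in_V[OF hx] by blast+
  have x_out: "x \<in> V - closed_nbhd V E y"
    using xV hy(2) xy edge_sym[of y x] by (auto simp: closed_nbhd_def)
  have only_x: "z = x" if "z \<in> V - closed_nbhd V E y" for z
    using nonneighbour_unique_if_isolated[OF yV x_out that] x_nbr edge_sym[OF hy(1)] h_in_V
    by (auto simp: closed_nbhd_def)
  have inner_nbr_y: "E y z" if "z \<in> inner" for z
  proof (rule ccontr)
    assume "\<not> E y z"
    then have "z = x" using only_x[of z] that inner_iff hy(1) by (auto simp: closed_nbhd_def)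
    then show False using that hx inner_iff by blast
  qed
  have inner_w: "z = w" if z: "z \<in> inner" for z
  proof (rule ccontr)
    assume "z \<noteq> w"
    then obtain q where "q \<in> inner" "E w q"
      using reach_in_first_step[OF reach_inner[OF w z]] by metis
    then show False using no_triangle[OF inner_nbr_y[OF w] _ inner_nbr_y] by blast
  qed
  have nbr_h: "z = x \<or> z = y" if "E h z" for z
  proof (rule ccontr)
    assume "\<not> (z = x \<or> z = y)"
    then have "E y z" using only_x[of z] edge_in_V[OF that] by (auto simp: closed_nbhd_def)
    then show False using no_triangle[OF hy(1) _ that] by blast
  qed
  have V: "V = {x, h, y, w}"
  proof
    show "V \<subseteq> {x, h, y, w}"
      using nbr_h inner_w inner_iff by blast
  qed (use xV yV h_in_V w inner_iff in blast)
  have "\<not> E h w" "w \<noteq> x" "w \<noteq> y" "w \<noteq> h" using w hx hy(1) inner_iff by blast+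
  moreover have "\<not> E x w" using no_inner[OF w] .
  moreover have "x \<noteq> h" "y \<noteq> h" using edge_in_V[OF hx] edge_in_V[OF hy(1)] by blast+
  ultimately show ?thesis
    using path_graph_4[OF graph _ V edge_sym[OF hx] hy(1) inner_nbr_y[OF w] xy] hy(2) by auto
qed

lemma path_if_inner_leaf:
  assumes nbr_inner: "\<And>x. E h x \<Longrightarrow> \<exists>y\<in>inner. E x y"
    and l: "l \<in> inner" "E l p" "\<And>q. E l q \<Longrightarrow> q = p"
  shows "is_path_graph V E"
proof -
  have lV: "l \<in> V" "l \<noteq> h" "\<not> E h l" using l(1) inner_iff by blast+
  have pV: "p \<in> V" "p \<noteq> h" "p \<noteq> l" using edge_in_V[OF l(2)] edge_sym[OF l(2)] lV(3) by blast+
  text \<open>Otherwise \<open>l\<close> and \<open>p\<close> would form a component avoiding \<open>h\<close>.\<close>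
  obtain q where q: "E p q" "q \<noteq> l"
  proof (rule ccontr)
    assume "\<not> thesis"
    then have "E a b \<Longrightarrow> a \<in> {l, p} \<Longrightarrow> b \<in> {l, p}" for a b
      using that l(3)[of b] by blast
    then have "h \<in> {l, p}" using edge_closed_contains_V[of l "{l, p}", OF lV(1) _ _ h_in_V] by blast
    then show False using lV(2) pV(2) by blast
  qed
  have qV: "q \<in> V" "q \<noteq> p" using edge_in_V[OF q(1)] by blast+
  have l_out: "l \<in> V - closed_nbhd V E q"
    using lV(1) q(2) l(3)[of q] qV(2) edge_sym[of q l] by (auto simp: closed_nbhd_def)
  have l_nbrs: "r \<in> closed_nbhd V E q" if "E l r" for r
    using l(3)[OF that] edge_sym[OF q(1)] pV(1) by (auto simp: closed_nbhd_def)
  have cover: "z = l \<or> z = q \<or> E q z" if "z \<in> V" for z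
  proof (cases "z = q \<or> E q z")
    case False
    then have "z \<in> V - closed_nbhd V E q" using that by (auto simp: closed_nbhd_def)
    then show ?thesis using nonneighbour_unique_if_isolated[OF qV(1) l_out _ l_nbrs] by blast
  qed blast
  show ?thesis
  proof (cases "q = h")
    case True
    have inner_l: "z = l" if "z \<in> inner" for z
      using cover[of z] that inner_iff True by blast
    have nbr_h: "z = p" if "E h z" for z
      using nbr_inner[OF that] inner_l l(3) edge_sym by blast
    have "V = {h, p, l}"
    proof
      show "V \<subseteq> {h, p, l}" using nbr_h inner_l inner_iff by blast
    qed (use h_in_V pV lV in blast)
    moreover have "E h p" using edge_sym[OF q(1)] True by simp
    moreover have "distinct [h, p, l]" using pV lV by auto
    ultimately show ?thesis
      using path_graph_3[OF graph _ _ _ edge_sym[OF l(2)] lV(3)] by blast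
  next
    case False
    have Eqh: "E q h" using cover[OF h_in_V] lV(2) False by auto
    have hp: "\<not> E h p" using no_triangle[OF edge_sym[OF Eqh] q(1)[THEN edge_sym]] edge_sym by blast
    then have p_inner: "p \<in> inner" using pV inner_iff by blast
    have nbr_h: "z = q" if "E h z" for z
    proof (rule ccontr)
      assume "z \<noteq> q"
      then have "E q z" using cover[of z] edge_in_V[OF that] that lV(3) by blast
      then show False using no_triangle[OF edge_sym[OF Eqh] _ that] by blast
    qed
    have inner_pl: "z = p \<or> z = l" if "z \<in> inner" for z
    proof (rule ccontr)
      assume z: "\<not> (z = p \<or> z = l)"
      have "z \<noteq> q" using that Eqh edge_sym[of q h] inner_iff by blast
      then have "E q z" using cover[of z] that inner_iff z by blast
      then show False
        using neighbour_one_inner_neighbour[OF edge_sym[OF Eqh] that p_inner _ edge_sym[OF q(1)]] z by blast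
    qed
    have "V = {h, q, p, l}"
    proof
      show "V \<subseteq> {h, q, p, l}" using nbr_h inner_pl inner_iff by blast
    qed (use h_in_V pV lV qV in blast)
    moreover have "\<not> E q l" using l(3)[of q] qV(2) edge_sym[of q l] by blast
    moreover have "distinct [h, q, p, l]" using pV lV qV False q(2) by auto
    ultimately show ?thesis
      using path_graph_4[OF graph _ _ edge_sym[OF Eqh] edge_sym[OF q(1)] edge_sym[OF l(2)] hp lV(3)]
      by blast
  qed
qed

lemma chandelier_if_no_inner_leaf:
  assumes nbr_inner: "\<And>x. E h x \<Longrightarrow> \<exists>y\<in>inner. E x y"
    and no_leaf: "\<And>l p. l \<in> inner \<Longrightarrow> E l p \<Longrightarrow> \<exists>q. E l q \<and> q \<noteq> p"
  shows "is_chandelier V E"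
  unfolding is_chandelier_def
proof (intro bexI conjI)
  have inner_sub: "inner \<subseteq> V - {h}" using inner_iff by blast
  have off_h: "z \<in> V - {h} \<longleftrightarrow> z \<in> inner \<or> E h z" for z
    using inner_iff edge_in_V[of h z] by blast
  obtain w where w: "w \<in> inner" using inner_nonempty by blast
  show "is_tree_in (V - {h}) E"
    unfolding is_tree_in_def
  proof
    show "connected_in (V - {h}) E"
    proof (rule connected_in_if_reach_from[where w = w])
      show "w \<in> V - {h}" using w inner_sub by blast
      show "E u v \<Longrightarrow> E v u" for u v by (rule edge_sym)
      fix u
      assume u: "u \<in> V - {h}"
      have to_inner: "reach_in (V - {h}) E w y" if "y \<in> inner" for y
        using reach_in_mono[OF reach_inner[OF w that] inner_sub] .
      show "reach_in (V - {h}) E w u"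
      proof (cases "u \<in> inner")
        case False
        then obtain y where "y \<in> inner" "E u y" using nbr_inner off_h u by blast
        then show ?thesis
          using reach_in_step[OF to_inner _ u edge_sym] inner_sub by blast
      qed (rule to_inner)
    qed
    show "\<not> has_cycle_in (V - {h}) E"
      using cycle_hollow[of "V - {h}"] hollow_unique by blast
  qed
  show "{w \<in> V. E h w} = {v. is_leaf_in (V - {h}) E v}"
  proof (intro set_eqI iffI)
    fix v
    assume "v \<in> {w \<in> V. E h w}"
    then have v: "v \<in> V" "E h v" by blast+
    obtain y where y: "y \<in> inner" "E v y" using nbr_inner[OF v(2)] by blast
    have "{u \<in> V - {h}. E v u} = {y}"
    proof
      show "{u \<in> V - {h}. E v u} \<subseteq> {y}"
      proof
        fix z
        assume z: "z \<in> {u \<in> V - {h}. E v u}"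
        then have "z \<in> inner" using off_h no_triangle[OF v(2)] by blast
        then show "z \<in> {y}"
          using neighbour_one_inner_neighbour[OF v(2) _ y(1) _ y(2)] z by blast
      qed
    qed (use y inner_sub in blast)
    moreover have "v \<in> V - {h}" using v edge_in_V by blast
    ultimately show "v \<in> {v. is_leaf_in (V - {h}) E v}" unfolding is_leaf_in_def by simp
  next
    fix v
    assume "v \<in> {v. is_leaf_in (V - {h}) E v}"
    then have v: "v \<in> V - {h}" and one: "card {u \<in> V - {h}. E v u} = 1"
      unfolding is_leaf_in_def by blast+
    obtain p where p: "{u \<in> V - {h}. E v u} = {p}" using card_1_singletonE[OF one] by blast
    show "v \<in> {w \<in> V. E h w}"
    proof (rule ccontr)
      assume "v \<notin> {w \<in> V. E h w}"
      then have v_inner: "v \<in> inner" using v off_h by blast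
      obtain q where q: "E v q" "q \<noteq> p" using no_leaf[OF v_inner] p by blast
      have "q \<in> V - {h}" using edge_in_V[OF q(1)] v_inner q(1) edge_sym inner_iff by blast
      then show False using p q by blast
    qed
  qed
qed (rule h_in_V)

theorem path_or_chandelier: "is_path_graph V E \<or> is_chandelier V E"
proof (cases "\<exists>x. E h x \<and> (\<forall>y\<in>inner. \<not> E x y)")
  case True
  then show ?thesis using path_if_neighbour_without_inner_neighbour by blast
next
  case False
  then have nbr_inner: "\<And>x. E h x \<Longrightarrow> \<exists>y\<in>inner. E x y" by blast
  show ?thesis
  proof (cases "\<exists>l p. l \<in> inner \<and> E l p \<and> (\<forall>q. E l q \<longrightarrow> q = p)")
    case True
    then show ?thesis using path_if_inner_leaf[OF nbr_inner] by blast
  next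
    case False
    then show ?thesis using chandelier_if_no_inner_leaf[OF nbr_inner] by blast
  qed
qed

end

context box_layout
begin

theorem path_or_chandelier: "is_path_graph V E \<or> is_chandelier V E"
proof (cases "\<exists>h h'. hollow h \<and> hollow h' \<and> h \<noteq> h'")
  case True
  then obtain h h' where "hollow h" "hollow h'" "h \<noteq> h'" by blast
  moreover from this have "crosses h h' \<or> crosses h' h"
    using crosses_if_edge hollow_adjacent by blast
  ultimately show ?thesis using path_or_chandelier_if_two_hollow by blast
next
  case False
  show ?thesis
  proof (cases "\<exists>h. hollow h")
    case True
    then obtain h where "hollow h" by blast
    then interpret unique_hollow V E F h
      using False by unfold_locales blast+
    show ?thesis by (rule path_or_chandelier)
  qed (use path_if_no_hollow in blast)
qed

end

section \<open>Restricted frame graphs\<close>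

lemma frames_meet_iff_crosses:
  assumes "valid_box B" "valid_box C"
    and "corners B \<inter> frame C = {}" "corners C \<inter> frame B = {}"
    and "left_side B \<inter> frame C = {}" "left_side C \<inter> frame B = {}"
    and "right_side B \<inter> frame C \<noteq> {} \<Longrightarrow>
      right_side B \<inter> top_side C \<noteq> {} \<and> right_side B \<inter> bottom_side C \<noteq> {}"
    and "right_side C \<inter> frame B \<noteq> {} \<Longrightarrow>
      right_side C \<inter> top_side B \<noteq> {} \<and> right_side C \<inter> bottom_side B \<noteq> {}"
  shows "frame B \<inter> frame C \<noteq> {} \<longleftrightarrow> box_crosses B C \<or> box_crosses C B"
proof
  obtain x1 x2 y1 y2 where B: "B = (x1, x2, y1, y2)" by (cases B rule: prod_cases4)
  obtain x1' x2' y1' y2' where C: "C = (x1', x2', y1', y2')" by (cases C rule: prod_cases4)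
  assume "frame B \<inter> frame C \<noteq> {}"
  then show "box_crosses B C \<or> box_crosses C B"
    using frames_meet_imp_crosses[of x1 x2 y1 y2 x1' x2' y1' y2'] assms
    unfolding B C valid_box_def by simp
next
  assume "box_crosses B C \<or> box_crosses C B"
  then show "frame B \<inter> frame C \<noteq> {}"
    using crosses_imp_frames_meet assms(1,2) by blast
qed

lemma box_layout_if_restricted_frame_graph:
  assumes "graph V E" "connected_in V E" "triangle_free V E" "\<not> has_full_star_cutset V E"
    and "restricted_frame_graph V E"
  obtains F where "box_layout V E F"
proof -
  obtain F where valid': "\<forall>v\<in>V. valid_box (F v)"
    and edge': "\<forall>u\<in>V. \<forall>v\<in>V. u \<noteq> v \<longrightarrow> (E u v \<longleftrightarrow> frame (F u) \<inter> frame (F v) \<noteq> {})"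
    and corners': "\<forall>u\<in>V. \<forall>v\<in>V. u \<noteq> v \<longrightarrow> corners (F u) \<inter> frame (F v) = {}"
    and left': "\<forall>u\<in>V. \<forall>v\<in>V. u \<noteq> v \<longrightarrow> left_side (F u) \<inter> frame (F v) = {}"
    and right': "\<forall>u\<in>V. \<forall>v\<in>V. u \<noteq> v \<longrightarrow> right_side (F u) \<inter> frame (F v) \<noteq> {} \<longrightarrow>
      right_side (F u) \<inter> top_side (F v) \<noteq> {} \<and> right_side (F u) \<inter> bottom_side (F v) \<noteq> {}"
    and lens': "\<forall>u\<in>V. \<forall>v\<in>V. u \<noteq> v \<longrightarrow> frame (F u) \<inter> frame (F v) \<noteq> {} \<longrightarrow>
      (\<forall>w\<in>V. \<not> frame (F w) \<subseteq> region (F u) \<inter> region (F v))"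
    using assms(5) unfolding restricted_frame_graph_def by (elim exE conjE) (rule that; assumption)
  note valid = valid'[rule_format] and edge = edge'[rule_format] and corners = corners'[rule_format]
    and left = left'[rule_format] and right = right'[rule_format] and lens = lens'[rule_format]
  have meet_iff: "frame (F u) \<inter> frame (F v) \<noteq> {} \<longleftrightarrow> box_crosses (F u) (F v) \<or> box_crosses (F v) (F u)"
    if "u \<in> V" "v \<in> V" "u \<noteq> v" for u v
    using frames_meet_iff_crosses[OF valid valid corners corners left left right right] that by blast
  have "box_layout V E F"
  proof
    show "E u v \<longleftrightarrow> box_crosses (F u) (F v) \<or> box_crosses (F v) (F u)" if "u \<in> V" "v \<in> V" for u v
    proof (cases "u = v")
      case True
      then show ?thesis
        using graph_edge_in[OF assms(1)] box_crosses_height[of "F v" "F v"] by auto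
    qed (use edge meet_iff that in blast)
    show "box_apart (F u) (F v) \<or> box_inside (F u) (F v) \<or> box_inside (F v) (F u)"
      if "u \<in> V" "v \<in> V" "u \<noteq> v" "\<not> E u v" for u v
      using disjoint_frames_apart_or_nested[OF valid valid] edge that by blast
    show "\<not> region (F w) \<subseteq> region (F u) \<inter> region (F v)"
      if "u \<in> V" "v \<in> V" "w \<in> V" "box_crosses (F u) (F v)" for u v w
    proof
      assume "region (F w) \<subseteq> region (F u) \<inter> region (F v)"
      moreover have "u \<noteq> v" using box_crosses_height[OF that(4)] by auto
      ultimately show False
        using lens[OF that(1,2) _ _ that(3)] meet_iff[OF that(1,2)] that(4)
          frame_subset_region[OF valid[OF that(3)]] by blast
    qed
  qed (use assms valid in auto)
  then show ?thesis using that by blast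
qed

theorem lemma3p12:
  fixes V :: "'a set" and E :: "'a \<Rightarrow> 'a \<Rightarrow> bool"
  assumes "graph V E"
    and "connected_in V E"
    and "triangle_free V E"
    and "\<not> has_full_star_cutset V E"
    and "restricted_frame_graph V E"
  shows "is_path_graph V E \<or> is_chandelier V E"
proof -
  obtain F where "box_layout V E F"
    using box_layout_if_restricted_frame_graph[OF assms] by blast
  then show ?thesis by (rule box_layout.path_or_chandelier)
qed

end
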